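(* Let $(b,c)$ be a connected graph over a countable set $X$, and let $G$ be a nilpotent group acting cocompactly on $X$ such that the Schrödinger operator $H=H_{b,c}$ is $G$-invariant. Fix $x_0\in X$ and let $\mathcal{K}$ be the closure in $C(X)$ (product topology) of $\{f\in\mathcal{H}^+ : f(x_0)=1\}$. Then: (a) every element of $\mathcal{K}$ is $[G,G]$-invariant, where $[G,G]$ is the commutator subgroup of $G$; (b) every extreme point of the convex set $\mathcal{K}$ which is harmonic is multiplicative (i.e. $G$-multiplicative).
   Context: $X$ is a countable set. A graph over $X$ is a pair $(b,c)$ with $b:X\times X\to[0,\infty)$ and $c:X\to\mathbb{R}$ such that $\sum_{y\in X}b(x,y)<\infty$ for all $x$ ($b$ need not be symmetric). The graph is connected if for all $x,z\in X$ there is a finite sequence $x=y_1,\dots,y_n=z$ with $b(y_i,y_{i+1})>0$. $C(X)$ denotes the space of all real functions on $X$ with the product topology (pointwise convergence). $\mathrm{Dom}(H)=\{f\in C(X):\sum_y b(x,y)|f(y)|<\infty \ \forall x\}$ and $Hf(x)=\sum_{y}b(x,y)(f(x)-f(y))+c(x)f(x)$. A function $f\in\mathrm{Dom}(H)$ is harmonic if $Hf=0$; $\mathcal{H}^+$ is the set of nonnegative, not identically zero harmonic functions. For a group $G$ acting on $X$, $T_gf(x)=f(g^{-1}x)$. The action is cocompact if there is a finite $V\subseteq X$ with $GV=X$. $H$ is $G$-invariant if $T_g(\mathrm{Dom}(H))\subseteq\mathrm{Dom}(H)$ and $HT_g=T_gH$ for all $g\in G$. For a subgroup $R\subseteq G$,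 $f$ is $R$-invariant if $T_gf=f$ for all $g\in R$, and $f$ is $R$-multiplicative if there is a group homomorphism $\gamma:R\to(0,\infty)$ (multiplicative group) with $T_gf=\gamma(g^{-1})f$ for all $g\in R$; multiplicative means $G$-multiplicative. *)

theory Defs
  imports "HOL-Analysis.Analysis" "HOL-Algebra.Solvable_Groups" "HOL-Algebra.Group_Action"
begin

definition graph_over :: "('x::countable \<Rightarrow> 'x \<Rightarrow> real) \<Rightarrow> ('x \<Rightarrow> real) \<Rightarrow> bool" where
  "graph_over b c \<longleftrightarrow> (\<forall>x y. 0 \<le> b x y) \<and> (\<forall>x. (\<lambda>y. b x y) summable_on UNIV)"

definition connected_graph :: "('x \<Rightarrow> 'x \<Rightarrow> real) \<Rightarrow> bool" where
  "connected_graph b \<longleftrightarrow> (\<forall>x z. (\<lambda>u v. b u v > 0)\<^sup>*\<^sup>* x z)"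

definition dom_H :: "('x \<Rightarrow> 'x \<Rightarrow> real) \<Rightarrow> ('x \<Rightarrow> real) set" where
  "dom_H b = {f. \<forall>x. (\<lambda>y. b x y * \<bar>f y\<bar>) summable_on UNIV}"

definition schroedinger :: "('x \<Rightarrow> 'x \<Rightarrow> real) \<Rightarrow> ('x \<Rightarrow> real) \<Rightarrow> ('x \<Rightarrow> real) \<Rightarrow> ('x \<Rightarrow> real)" where
  "schroedinger b c f = (\<lambda>x. (\<Sum>\<^sub>\<infinity>y. b x y * (f x - f y)) + c x * f x)"

definition harmonic :: "('x \<Rightarrow> 'x \<Rightarrow> real) \<Rightarrow> ('x \<Rightarrow> real) \<Rightarrow> ('x \<Rightarrow> real) \<Rightarrow> bool" where
  "harmonic b c f \<longleftrightarrow> f \<in> dom_H b \<and> schroedinger b c f = (\<lambda>x. 0)"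

definition pos_harmonic :: "('x \<Rightarrow> 'x \<Rightarrow> real) \<Rightarrow> ('x \<Rightarrow> real) \<Rightarrow> ('x \<Rightarrow> real) set" where
  "pos_harmonic b c = {f. harmonic b c f \<and> (\<forall>x. 0 \<le> f x) \<and> f \<noteq> (\<lambda>x. 0)}"

text \<open>Extreme point of a subset of C(X) (the function space is not a real_vector instance,
  so the standard notion is written out: not an interior point of a segment between two
  distinct points of the set).\<close>
definition extreme_point_fun :: "('x \<Rightarrow> real) \<Rightarrow> ('x \<Rightarrow> real) set \<Rightarrow> bool" where
  "extreme_point_fun f K \<longleftrightarrow> f \<in> K \<and>
     (\<forall>g\<in>K. \<forall>h\<in>K. \<forall>t::real. 0 < t \<and> t < 1 \<and> g \<noteq> h \<longrightarrow> f \<noteq> (\<lambda>x. (1 - t) * g x + t * h x))"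

fun lower_central :: "('g, 'b) monoid_scheme \<Rightarrow> nat \<Rightarrow> 'g set" where
  "lower_central G 0 = carrier G"
| "lower_central G (Suc n) = generate G
     {h1 \<otimes>\<^bsub>G\<^esub> h2 \<otimes>\<^bsub>G\<^esub> inv\<^bsub>G\<^esub> h1 \<otimes>\<^bsub>G\<^esub> inv\<^bsub>G\<^esub> h2 | h1 h2. h1 \<in> carrier G \<and> h2 \<in> lower_central G n}"

definition nilpotent_group :: "('g, 'b) monoid_scheme \<Rightarrow> bool" where
  "nilpotent_group G \<longleftrightarrow> group G \<and> (\<exists>n. lower_central G n = {\<one>\<^bsub>G\<^esub>})"

definition commutator_subgroup :: "('g, 'b) monoid_scheme \<Rightarrow> 'g set" where
  "commutator_subgroup G = derived G (carrier G)"

definition Tg :: "('g, 'b) monoid_scheme \<Rightarrow> ('g \<Rightarrow> 'x \<Rightarrow> 'x) \<Rightarrow> 'g \<Rightarrow> ('x \<Rightarrow> real) \<Rightarrow> ('x \<Rightarrow> real)" where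
  "Tg G \<phi> g f = (\<lambda>x. f (\<phi> (inv\<^bsub>G\<^esub> g) x))"

definition cocompact :: "('g, 'b) monoid_scheme \<Rightarrow> ('g \<Rightarrow> 'x \<Rightarrow> 'x) \<Rightarrow> bool" where
  "cocompact G \<phi> \<longleftrightarrow> (\<exists>V. finite V \<and> (\<Union>g\<in>carrier G. \<phi> g ` V) = UNIV)"

definition H_invariant :: "('g, 'b) monoid_scheme \<Rightarrow> ('g \<Rightarrow> 'x \<Rightarrow> 'x) \<Rightarrow>
    ('x \<Rightarrow> 'x \<Rightarrow> real) \<Rightarrow> ('x \<Rightarrow> real) \<Rightarrow> bool" where
  "H_invariant G \<phi> b c \<longleftrightarrow> (\<forall>g\<in>carrier G.
      Tg G \<phi> g ` dom_H b \<subseteq> dom_H b \<and>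
      (\<forall>f\<in>dom_H b. schroedinger b c (Tg G \<phi> g f) = Tg G \<phi> g (schroedinger b c f)))"

definition R_invariant :: "('g, 'b) monoid_scheme \<Rightarrow> ('g \<Rightarrow> 'x \<Rightarrow> 'x) \<Rightarrow> 'g set \<Rightarrow> ('x \<Rightarrow> real) \<Rightarrow> bool" where
  "R_invariant G \<phi> R f \<longleftrightarrow> (\<forall>g\<in>R. Tg G \<phi> g f = f)"

definition pos_mult_hom :: "('g, 'b) monoid_scheme \<Rightarrow> 'g set \<Rightarrow> ('g \<Rightarrow> real) \<Rightarrow> bool" where
  "pos_mult_hom G R \<gamma> \<longleftrightarrow> (\<forall>g\<in>R. 0 < \<gamma> g) \<and> (\<forall>g\<in>R. \<forall>h\<in>R. \<gamma> (g \<otimes>\<^bsub>G\<^esub> h) = \<gamma> g * \<gamma> h)"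

definition R_multiplicative :: "('g, 'b) monoid_scheme \<Rightarrow> ('g \<Rightarrow> 'x \<Rightarrow> 'x) \<Rightarrow> 'g set \<Rightarrow> ('x \<Rightarrow> real) \<Rightarrow> bool" where
  "R_multiplicative G \<phi> R f \<longleftrightarrow> (\<exists>\<gamma>. pos_mult_hom G R \<gamma> \<and>
      (\<forall>g\<in>R. Tg G \<phi> g f = (\<lambda>x. \<gamma> (inv\<^bsub>G\<^esub> g) * f x)))"

definition multiplicative :: "('g, 'b) monoid_scheme \<Rightarrow> ('g \<Rightarrow> 'x \<Rightarrow> 'x) \<Rightarrow> ('x \<Rightarrow> real) \<Rightarrow> bool" where
  "multiplicative G \<phi> f \<longleftrightarrow> R_multiplicative G \<phi> (carrier G) f"

end

(*
  K is compact (Harnack inequality and Tychonoff), and we show by descending induction on n >= 1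
  that every function in K is invariant under the n-th term G_n of the lower central series; for
  large n this is nilpotency. Suppose K is G_(m+2)-invariant. For g in G_(m+1), cocompactness and
  Harnack bound T_g f <= M f on K (the commutators [a, g^-1] act trivially), so an extreme point u,
  being a convex combination of the normalizations of T_g u and u - eps T_g u, is an eigenfunction
  T_g u = chi(g) u. The eigenvalue chi is a conjugation-invariant character of G_(m+1), hence
  chi([h^n, k^n]) = chi([h, k])^(n^2) for h in G and k in G_m, while the Harnack inequality only
  allows growth A^n along such words. Thus chi([h, k]) = 1, the extreme points are
  G_(m+1)-invariant, and by Bauer's maximum principle (extreme points of compact subsets of R^X,
  X countable, detect linear inequalities) so is all of K. Once K is [G, G]-invariant, the same
  domination argument applies to all g in G, and the eigenvalue of an extreme point is a
  character of G, i.e. the extreme point is multiplicative.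
*)
theory Submission
  imports Defs
begin

section \<open>Harmonic functions on a graph\<close>

locale schroedinger_graph =
  fixes b :: "'x::countable \<Rightarrow> 'x \<Rightarrow> real" and c :: "'x \<Rightarrow> real"
  assumes graph: "graph_over b c"
begin

lemma weight_nonneg: "0 \<le> b x y"
  using graph by (simp add: graph_over_def)

lemma weight_summable: "(\<lambda>y. b x y) summable_on UNIV"
  using graph by (simp add: graph_over_def)

lemma dom_H_summable:
  assumes "f \<in> dom_H b"
  shows "(\<lambda>y. b x y * f y) summable_on UNIV"
proof -
  have "(\<lambda>y. norm (b x y * f y)) summable_on UNIV"
    using assms weight_nonneg by (simp add: dom_H_def abs_mult)
  then show ?thesis
    by (subst summable_on_iff_abs_summable_on_real)
qed

lemma schroedinger_eq:
  assumes "f \<in> dom_H b"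
  shows "schroedinger b c f x = f x * (\<Sum>\<^sub>\<infinity>y. b x y) - (\<Sum>\<^sub>\<infinity>y. b x y * f y) + c x * f x"
proof -
  have "(\<Sum>\<^sub>\<infinity>y. b x y * (f x - f y)) = (\<Sum>\<^sub>\<infinity>y. f x * b x y + - (b x y * f y))"
    by (simp add: algebra_simps)
  also have "\<dots> = (\<Sum>\<^sub>\<infinity>y. f x * b x y) + (\<Sum>\<^sub>\<infinity>y. - (b x y * f y))"
    using weight_summable dom_H_summable[OF assms]
    by (intro infsum_add summable_on_cmult_right) (simp_all add: summable_on_uminus)
  also have "\<dots> = f x * (\<Sum>\<^sub>\<infinity>y. b x y) - (\<Sum>\<^sub>\<infinity>y. b x y * f y)"
    by (simp add: infsum_cmult_right[OF weight_summable] infsum_uminus)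
  finally show ?thesis
    by (simp add: schroedinger_def)
qed

lemma harmonic_weighted_sum:
  assumes "harmonic b c f"
  shows "(\<Sum>\<^sub>\<infinity>y. b x y * f y) = f x * ((\<Sum>\<^sub>\<infinity>y. b x y) + c x)"
proof -
  have "schroedinger b c f x = 0"
    using assms by (simp add: harmonic_def)
  then show ?thesis
    using assms schroedinger_eq[of f x] by (simp add: harmonic_def algebra_simps)
qed

lemma dom_H_lincomb:
  assumes "f \<in> dom_H b" "g \<in> dom_H b"
  shows "(\<lambda>x. \<alpha> * f x + \<beta> * g x) \<in> dom_H b"
  unfolding dom_H_def
proof (intro CollectI allI)
  fix x
  have "(\<lambda>y. \<bar>\<alpha>\<bar> * (b x y * \<bar>f y\<bar>) + \<bar>\<beta>\<bar> * (b x y * \<bar>g y\<bar>)) summable_on UNIV"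
    using assms by (intro summable_on_add summable_on_cmult_right) (auto simp: dom_H_def)
  then show "(\<lambda>y. b x y * \<bar>\<alpha> * f y + \<beta> * g y\<bar>) summable_on UNIV"
  proof (rule summable_on_comparison_test)
    fix y
    have "\<bar>\<alpha> * f y + \<beta> * g y\<bar> \<le> \<bar>\<alpha>\<bar> * \<bar>f y\<bar> + \<bar>\<beta>\<bar> * \<bar>g y\<bar>"
      by (metis abs_mult abs_triangle_ineq)
    from mult_left_mono[OF this weight_nonneg]
    show "b x y * \<bar>\<alpha> * f y + \<beta> * g y\<bar>
        \<le> \<bar>\<alpha>\<bar> * (b x y * \<bar>f y\<bar>) + \<bar>\<beta>\<bar> * (b x y * \<bar>g y\<bar>)"
      by (simp add: algebra_simps)
    show "0 \<le> b x y * \<bar>\<alpha> * f y + \<beta> * g y\<bar>"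
      using weight_nonneg by simp
  qed
qed

lemma harmonic_lincomb:
  assumes f: "harmonic b c f" and g: "harmonic b c g"
  shows "harmonic b c (\<lambda>x. \<alpha> * f x + \<beta> * g x)"
proof -
  have df: "f \<in> dom_H b" and dg: "g \<in> dom_H b"
    using assms by (auto simp: harmonic_def)
  have "(\<Sum>\<^sub>\<infinity>y. b x y * (\<alpha> * f y + \<beta> * g y))
      = \<alpha> * (\<Sum>\<^sub>\<infinity>y. b x y * f y) + \<beta> * (\<Sum>\<^sub>\<infinity>y. b x y * g y)" for x
  proof -
    have "(\<Sum>\<^sub>\<infinity>y. b x y * (\<alpha> * f y + \<beta> * g y))
        = (\<Sum>\<^sub>\<infinity>y. \<alpha> * (b x y * f y)) + (\<Sum>\<^sub>\<infinity>y. \<beta> * (b x y * g y))"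
      unfolding distrib_left mult.left_commute[of "b x _"]
      by (intro infsum_add summable_on_cmult_right dom_H_summable df dg)
    then show ?thesis
      by (simp add: infsum_cmult_right[OF dom_H_summable[OF df]]
          infsum_cmult_right[OF dom_H_summable[OF dg]])
  qed
  then have "schroedinger b c (\<lambda>x. \<alpha> * f x + \<beta> * g x) x = 0" for x
    unfolding schroedinger_eq[OF dom_H_lincomb[OF df dg]]
      harmonic_weighted_sum[OF f] harmonic_weighted_sum[OF g]
    by (simp add: algebra_simps)
  then show ?thesis
    using dom_H_lincomb[OF df dg] by (simp add: harmonic_def fun_eq_iff)
qed

lemma harmonic_nonneg_edge_bound:
  assumes "harmonic b c f" "\<forall>x. 0 \<le> f x"
  shows "b x y * f y \<le> f x * (\<bar>\<Sum>\<^sub>\<infinity>z. b x z\<bar> + \<bar>c x\<bar>)"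
proof -
  have "b x y * f y = (\<Sum>\<^sub>\<infinity>z\<in>{y}. b x z * f z)"
    by simp
  also have "\<dots> \<le> (\<Sum>\<^sub>\<infinity>z. b x z * f z)"
  proof (rule infsum_mono_neutral)
    show "(\<lambda>z. b x z * f z) summable_on UNIV"
      using assms(1) by (simp add: harmonic_def dom_H_summable)
    show "0 \<le> b x z * f z" for z
      using assms(2) weight_nonneg by simp
  qed auto
  also have "\<dots> = f x * ((\<Sum>\<^sub>\<infinity>z. b x z) + c x)"
    by (rule harmonic_weighted_sum[OF assms(1)])
  also have "\<dots> \<le> f x * (\<bar>\<Sum>\<^sub>\<infinity>z. b x z\<bar> + \<bar>c x\<bar>)"
    using assms(2) by (intro mult_left_mono) auto
  finally show ?thesis .
qed

end

locale connected_schroedinger_graph = schroedinger_graph +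
  assumes connected: "connected_graph b"
begin

lemma pos_harmonic_pos:
  assumes "f \<in> pos_harmonic b c"
  shows "0 < f x"
proof (rule ccontr)
  assume "\<not> 0 < f x"
  have h: "harmonic b c f" and nonneg: "\<forall>x. 0 \<le> f x" and nonzero: "f \<noteq> (\<lambda>x. 0)"
    using assms by (auto simp: pos_harmonic_def)
  have "f z = 0" for z
  proof -
    have "(\<lambda>u v. b u v > 0)\<^sup>*\<^sup>* x z"
      using connected by (simp add: connected_graph_def)
    then show ?thesis
    proof (induction rule: rtranclp_induct)
      case base
      show ?case
        using nonneg[rule_format, of x] \<open>\<not> 0 < f x\<close> by linarith
    next
      case (step y z)
      then have "b y z * f z \<le> 0"
        using harmonic_nonneg_edge_bound[OF h nonneg, of y z] by simp
      with step.hyps(2) have "f z \<le> 0"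
        by (simp add: mult_le_0_iff)
      then show ?case
        using nonneg[rule_format, of z] by linarith
    qed
  qed
  then show False
    using nonzero by auto
qed

theorem harnack_inequality:
  "\<exists>C\<ge>0. \<forall>f. harmonic b c f \<and> (\<forall>x. 0 \<le> f x) \<longrightarrow> f y \<le> C * f x"
proof -
  have "(\<lambda>u v. b u v > 0)\<^sup>*\<^sup>* x y"
    using connected by (simp add: connected_graph_def)
  then show ?thesis
  proof (induction rule: rtranclp_induct)
    case base
    show ?case
      by (intro exI[of _ 1]) auto
  next
    case (step y z)
    then obtain C where C: "C \<ge> 0" "\<forall>f. harmonic b c f \<and> (\<forall>x. 0 \<le> f x) \<longrightarrow> f y \<le> C * f x"
      by blast
    define D where "D = (\<bar>\<Sum>\<^sub>\<infinity>w. b y w\<bar> + \<bar>c y\<bar>) / b y z"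
    have "f z \<le> D * C * f x" if f: "harmonic b c f" "\<forall>x. 0 \<le> f x" for f
    proof -
      have "f z * b y z \<le> (\<bar>\<Sum>\<^sub>\<infinity>w. b y w\<bar> + \<bar>c y\<bar>) * f y"
        using harmonic_nonneg_edge_bound[OF f, of y z] by (simp only: mult.commute)
      then have "f z \<le> D * f y"
        using step.hyps(2) by (simp add: D_def pos_le_divide_eq)
      also have "\<dots> \<le> D * (C * f x)"
        using C f step.hyps(2) by (intro mult_left_mono) (auto simp: D_def)
      finally show ?thesis
        by simp
    qed
    moreover have "D * C \<ge> 0"
      using C step.hyps(2) by (simp add: D_def)
    ultimately show ?case
      by blast
  qed
qed

end


section \<open>Extreme points of compact sets of functions\<close>

lemma compact_PiE_intervals: "compact (PiE UNIV (\<lambda>i. {a i..b i}) :: ('i \<Rightarrow> real) set)"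
proof -
  have "compactin (product_topology (\<lambda>_. euclidean) UNIV) (PiE UNIV (\<lambda>i. {a i..b i}))"
    by (simp add: compactin_PiE)
  then show ?thesis
    by (simp add: euclidean_product_topology)
qed

lemma continuous_on_fun_eval: "continuous_on S (\<lambda>f::'a \<Rightarrow> 'b::topological_space. f y)"
  by (rule continuous_on_subset[OF continuous_on_product_coordinates]) simp

definition maximizers :: "'a set \<Rightarrow> ('a \<Rightarrow> real) \<Rightarrow> 'a set" where
  "maximizers A F = {f \<in> A. \<forall>g\<in>A. F g \<le> F f}"

lemma compact_maximizers:
  fixes A :: "'a::topological_space set"
  assumes "compact A" "A \<noteq> {}" "continuous_on UNIV F"
  shows "compact (maximizers A F)" "maximizers A F \<noteq> {}"
proof -
  have "maximizers A F = A \<inter> (\<Inter>g\<in>A. {f. F g \<le> F f})"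
    by (auto simp: maximizers_def)
  moreover have "closed (\<Inter>g\<in>A. {f. F g \<le> F f})"
    using assms(3) by (intro closed_INT ballI closed_Collect_le continuous_on_const) auto
  ultimately show "compact (maximizers A F)"
    using compact_Int_closed assms(1) by auto
  show "maximizers A F \<noteq> {}"
    using continuous_attains_sup[OF assms(1,2) continuous_on_subset[OF assms(3)]]
    by (auto simp: maximizers_def)
qed

lemma maximizers_face:
  assumes "p \<in> maximizers A F" "g \<in> A" "h \<in> A"
    and comb: "F p = (1 - t) * F g + t * F h" and t: "0 < t" "t < 1"
  shows "g \<in> maximizers A F" "h \<in> maximizers A F"
proof -
  have le: "F g \<le> F p" "F h \<le> F p"
    using assms(1-3) by (auto simp: maximizers_def)
  have "(1 - t) * F g \<le> (1 - t) * F p" "t * F h \<le> t * F p"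
    using le t by (simp_all add: mult_left_mono)
  moreover have "(1 - t) * F p + t * F p = F p"
    by (simp add: algebra_simps)
  ultimately have "(1 - t) * F g = (1 - t) * F p" "t * F h = t * F p"
    using comb by linarith+
  then have "F g = F p \<and> F h = F p"
    using t by simp
  then show "g \<in> maximizers A F" "h \<in> maximizers A F"
    using assms(1-3) by (auto simp: maximizers_def)
qed

lemma Inter_decreasing_compact_nonempty:
  fixes S :: "nat \<Rightarrow> 'a::t2_space set"
  assumes S: "\<And>n. compact (S n)" "\<And>n. S n \<noteq> {}" and decreasing: "\<And>n. S (Suc n) \<subseteq> S n"
  shows "\<Inter>(range S) \<noteq> {}"
proof -
  have antimono: "S n \<subseteq> S m" if "m \<le> n" for m n
    using decreasing by (rule lift_Suc_antimono_le[of S, OF _ that])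
  have "S 0 \<inter> \<Inter>(range S) \<noteq> {}"
  proof (rule compact_imp_fip)
    show "compact (S 0)" "\<And>T. T \<in> range S \<Longrightarrow> closed T"
      using S compact_imp_closed by auto
    fix F assume "finite F" "F \<subseteq> range S"
    then obtain I where I: "finite I" "F = S ` I"
      by (meson finite_subset_image)
    have "S (Max (insert 0 I)) \<subseteq> S i" if "i \<in> insert 0 I" for i
      using that I(1) by (intro antimono) simp
    then have "S (Max (insert 0 I)) \<subseteq> S 0 \<inter> \<Inter>F"
      using I(2) by blast
    then show "S 0 \<inter> \<Inter>F \<noteq> {}"
      using S by blast
  qed
  then show ?thesis
    by blast
qed

primrec lex_maximizers ::
  "('x::countable \<Rightarrow> real) set \<Rightarrow> (('x \<Rightarrow> real) \<Rightarrow> real) \<Rightarrow> nat \<Rightarrow> ('x \<Rightarrow> real) set"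
where
  "lex_maximizers K L 0 = maximizers K L"
| "lex_maximizers K L (Suc n) = maximizers (lex_maximizers K L n) (\<lambda>f. f (from_nat n))"

lemma compact_lex_maximizers:
  assumes "compact K" "K \<noteq> {}" "continuous_on UNIV L"
  shows "compact (lex_maximizers K L n) \<and> lex_maximizers K L n \<noteq> {}"
  by (induction n) (simp_all add: compact_maximizers assms continuous_on_fun_eval)

lemma lex_maximizers_Suc_subset: "lex_maximizers K L (Suc n) \<subseteq> lex_maximizers K L n"
  by (simp add: maximizers_def)

lemma extreme_point_if_lex_maximizer:
  fixes K :: "('x::countable \<Rightarrow> real) set"
  assumes affine: "\<And>g h t. L (\<lambda>x. (1 - t) * g x + t * h x) = (1 - t) * L g + t * L h"
    and p: "\<And>n. p \<in> lex_maximizers K L n"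
  shows "extreme_point_fun p K"
  unfolding extreme_point_fun_def
proof (intro conjI ballI allI impI)
  show "p \<in> K"
    using p[of 0] by (simp add: maximizers_def)
  fix g h and t :: real
  assume g: "g \<in> K" and h: "h \<in> K" and t: "0 < t \<and> t < 1 \<and> g \<noteq> h"
  show "p \<noteq> (\<lambda>x. (1 - t) * g x + t * h x)"
  proof
    assume p_eq: "p = (\<lambda>x. (1 - t) * g x + t * h x)"
    have gh: "g \<in> lex_maximizers K L n \<and> h \<in> lex_maximizers K L n" for n
    proof (induction n)
      case 0
      show ?case
        using maximizers_face[of p K L g h t] p[of 0] g h t by (simp add: p_eq affine)
    next
      case (Suc n)
      then show ?case
        using maximizers_face[of p _ "\<lambda>f. f (from_nat n)" g h t] p[of "Suc n"] t
        by (simp add: p_eq)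
    qed
    have "g z \<le> h z \<and> h z \<le> g z" for z
      using gh[of "Suc (to_nat z)"] by (simp add: maximizers_def)
    then have "g = h"
      by (simp add: fun_eq_iff order.antisym)
    then show False
      using t by simp
  qed
qed

text \<open>Bauer's maximum principle, for compact subsets of \<open>\<real>\<^sup>X\<close> with \<open>X\<close> countable.\<close>
theorem extreme_point_maximizer:
  fixes K :: "('x::countable \<Rightarrow> real) set"
  assumes K: "compact K" "K \<noteq> {}" and L: "continuous_on UNIV L"
    and affine: "\<And>g h t. L (\<lambda>x. (1 - t) * g x + t * h x) = (1 - t) * L g + t * L h"
  obtains p where "extreme_point_fun p K" "\<And>f. f \<in> K \<Longrightarrow> L f \<le> L p"
proof -
  have "\<Inter>(range (lex_maximizers K L)) \<noteq> {}"
  proof (rule Inter_decreasing_compact_nonempty)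
    show "compact (lex_maximizers K L n)" "lex_maximizers K L n \<noteq> {}" for n
      using compact_lex_maximizers[OF K L] by blast+
  qed (rule lex_maximizers_Suc_subset)
  then obtain p where p: "\<And>n. p \<in> lex_maximizers K L n"
    by blast
  have "L f \<le> L p" if "f \<in> K" for f
    using p[of 0] that by (simp add: maximizers_def)
  then show ?thesis
    using that extreme_point_if_lex_maximizer[OF affine p] by blast
qed

corollary le_if_le_on_extreme_points:
  fixes K :: "('x::countable \<Rightarrow> real) set"
  assumes "compact K" and extreme: "\<And>u. extreme_point_fun u K \<Longrightarrow> u y \<le> u x" and "f \<in> K"
  shows "f y \<le> f x"
proof -
  have "continuous_on UNIV (\<lambda>f::'x \<Rightarrow> real. f y - f x)"
    by (intro continuous_on_diff continuous_on_fun_eval)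
  then obtain p where "extreme_point_fun p K" "\<And>f. f \<in> K \<Longrightarrow> f y - f x \<le> p y - p x"
    using extreme_point_maximizer[of K "\<lambda>f. f y - f x"] assms by (auto simp: algebra_simps)
  then show ?thesis
    using extreme[of p] \<open>f \<in> K\<close> by fastforce
qed


section \<open>Lower central series\<close>

context group
begin

abbreviation commutator :: "'a \<Rightarrow> 'a \<Rightarrow> 'a"
  where "commutator h k \<equiv> h \<otimes> k \<otimes> inv h \<otimes> inv k"

lemma inv_cancel_left: "x \<in> carrier G \<Longrightarrow> y \<in> carrier G \<Longrightarrow> inv x \<otimes> (x \<otimes> y) = y"
  by (simp add: m_assoc[symmetric])

lemma inv_cancel_left': "x \<in> carrier G \<Longrightarrow> y \<in> carrier G \<Longrightarrow> x \<otimes> (inv x \<otimes> y) = y"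
  by (simp add: m_assoc[symmetric])

lemmas word_simps = m_assoc inv_mult_group inv_cancel_left inv_cancel_left'

lemma conj_eq_commutator_mult:
  "h \<in> carrier G \<Longrightarrow> g \<in> carrier G \<Longrightarrow> h \<otimes> g \<otimes> inv h = commutator h g \<otimes> g"
  by (simp add: word_simps)

lemma mult_swap_commutator:
  "h \<in> carrier G \<Longrightarrow> k \<in> carrier G \<Longrightarrow> k \<otimes> h = inv (commutator h k) \<otimes> (h \<otimes> k)"
  by (simp add: word_simps)

lemma inv_commutator:
  "h \<in> carrier G \<Longrightarrow> k \<in> carrier G \<Longrightarrow> inv (commutator h k) = commutator k h"
  by (simp add: word_simps)

lemma commutator_mult_right:
  "h \<in> carrier G \<Longrightarrow> a \<in> carrier G \<Longrightarrow> k \<in> carrier G \<Longrightarrow>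
    commutator h (a \<otimes> k) = commutator h a \<otimes> (a \<otimes> commutator h k \<otimes> inv a)"
  by (simp add: word_simps)

lemma commutator_mult_left:
  "h \<in> carrier G \<Longrightarrow> a \<in> carrier G \<Longrightarrow> k \<in> carrier G \<Longrightarrow>
    commutator (h \<otimes> a) k = (h \<otimes> commutator a k \<otimes> inv h) \<otimes> commutator h k"
  by (simp add: word_simps)

lemma subgroup_lower_central: "subgroup (lower_central G n) G"
proof (induction n)
  case 0
  show ?case
    by (simp add: subgroup_self)
next
  case (Suc n)
  have "{commutator h k | h k. h \<in> carrier G \<and> k \<in> lower_central G n} \<subseteq> carrier G"
    using subgroup.mem_carrier[OF Suc.IH] by auto
  then show ?case
    by (simp add: generate_is_subgroup)
qed

lemma lower_central_carrier: "g \<in> lower_central G n \<Longrightarrow> g \<in> carrier G"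
  using subgroup.mem_carrier[OF subgroup_lower_central] .

lemma commutator_in_lower_central:
  "h \<in> carrier G \<Longrightarrow> k \<in> lower_central G n \<Longrightarrow> commutator h k \<in> lower_central G (Suc n)"
  unfolding lower_central.simps by (rule generate.incl) blast

lemma lower_central_Suc_subset: "lower_central G (Suc n) \<subseteq> lower_central G n"
proof (induction n)
  case 0
  show ?case
    using subgroup.subset[OF subgroup_lower_central[of 1]] by simp
next
  case (Suc n)
  have "{commutator h k | h k. h \<in> carrier G \<and> k \<in> lower_central G (Suc n)}
      \<subseteq> lower_central G (Suc n)"
    using Suc.IH commutator_in_lower_central by blast
  then show ?case
    by (simp only: lower_central.simps(2)[of G "Suc n"])
       (rule generate_subgroup_incl[OF _ subgroup_lower_central])
qed

lemma lower_central_antimono: "m \<le> n \<Longrightarrow> lower_central G n \<subseteq> lower_central G m"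
  by (induction n rule: dec_induct) (use lower_central_Suc_subset in blast)+

lemma lower_central_conj_closed:
  assumes h: "h \<in> carrier G" and g: "g \<in> lower_central G n"
  shows "h \<otimes> g \<otimes> inv h \<in> lower_central G n"
proof -
  have "commutator h g \<in> lower_central G n"
    using commutator_in_lower_central[OF h g] lower_central_Suc_subset by blast
  from this g have "commutator h g \<otimes> g \<in> lower_central G n"
    by (rule subgroup.m_closed[OF subgroup_lower_central])
  then show ?thesis
    by (subst conj_eq_commutator_mult[OF h lower_central_carrier[OF g]])
qed

lemma commutator_subgroup_eq_lower_central: "commutator_subgroup G = lower_central G 1"
proof -
  have "derived_set G (carrier G) = {commutator h k | h k. h \<in> carrier G \<and> k \<in> carrier G}"
    by blast
  then show ?thesis
    by (simp add: commutator_subgroup_def derived_def)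
qed

lemma subgroup_nat_pow_closed:
  assumes "subgroup H G" "h \<in> H"
  shows "h [^] (n::nat) \<in> H"
  using assms by (induction n) (simp_all add: subgroup.one_closed subgroup.m_closed)

lemma character_commutator_power:
  fixes \<psi> :: "'a \<Rightarrow> 'c::comm_monoid_mult"
  assumes S: "subgroup S G" and H: "subgroup H G"
    and one: "\<psi> \<one> = 1"
    and mult: "\<And>g g'. g \<in> S \<Longrightarrow> g' \<in> S \<Longrightarrow> \<psi> (g \<otimes> g') = \<psi> g * \<psi> g'"
    and conj_closed: "\<And>a g. a \<in> carrier G \<Longrightarrow> g \<in> S \<Longrightarrow> a \<otimes> g \<otimes> inv a \<in> S"
    and conj_inv: "\<And>a g. a \<in> carrier G \<Longrightarrow> g \<in> S \<Longrightarrow> \<psi> (a \<otimes> g \<otimes> inv a) = \<psi> g"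
    and commutator_in: "\<And>a k. a \<in> carrier G \<Longrightarrow> k \<in> H \<Longrightarrow> commutator a k \<in> S"
    and h: "h \<in> carrier G" and k: "k \<in> H"
  shows "\<psi> (commutator (h [^] i) (k [^] j)) = \<psi> (commutator h k) ^ (i * j)"
proof -
  have kG: "k \<in> carrier G"
    using subgroup.mem_carrier[OF H k] .
  have kj: "k [^] j \<in> H" for j :: nat
    using subgroup_nat_pow_closed[OF H k] .
  then have kjG: "k [^] j \<in> carrier G" for j :: nat
    using subgroup.mem_carrier[OF H] by blast
  have right: "\<psi> (commutator a (k [^] j)) = \<psi> (commutator a k) ^ j"
    if a: "a \<in> carrier G" for a j
  proof (induction j)
    case 0
    show ?case
      using a by (simp add: one)
  next
    case (Suc j)
    have "commutator a (k [^] Suc j)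
        = commutator a (k [^] j) \<otimes> (k [^] j \<otimes> commutator a k \<otimes> inv (k [^] j))"
      using commutator_mult_right[OF a kjG kG] by simp
    then show ?case
      using Suc.IH a kj k by (simp add: mult commutator_in conj_closed conj_inv kjG mult.commute)
  qed
  show ?thesis
  proof (induction i)
    case 0
    show ?case
      using kjG by (simp add: one)
  next
    case (Suc i)
    have "commutator (h [^] Suc i) (k [^] j)
        = (h \<otimes> commutator (h [^] i) (k [^] j) \<otimes> inv h) \<otimes> commutator h (k [^] j)"
      unfolding nat_pow_Suc2[OF h] by (rule commutator_mult_left[OF h nat_pow_closed[OF h] kjG])
    then show ?case
      using Suc.IH h kj right[OF h]
      by (simp add: mult commutator_in conj_closed conj_inv power_add mult.commute)
  qed
qed

end


section \<open>Translation-invariant Schroedinger operators\<close>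

locale translation_action = group_action G "UNIV :: 'x set" \<phi>
  for G :: "('g, 'z) monoid_scheme" (structure) and \<phi> :: "'g \<Rightarrow> 'x \<Rightarrow> 'x"
begin

sublocale group G
  using group_hom by (rule group_hom.axioms(1))

abbreviation T :: "'g \<Rightarrow> ('x \<Rightarrow> real) \<Rightarrow> 'x \<Rightarrow> real"
  where "T \<equiv> Tg G \<phi>"

lemma T_apply: "T g f x = f (\<phi> (inv g) x)"
  by (simp add: Tg_def)

lemma action_mult: "g \<in> carrier G \<Longrightarrow> h \<in> carrier G \<Longrightarrow> \<phi> (g \<otimes> h) x = \<phi> g (\<phi> h x)"
  by (simp add: composition_rule)

lemma action_one: "\<phi> \<one> x = x"
  using id_eq_one by (metis UNIV_I restrict_apply')

lemma T_mult: "g \<in> carrier G \<Longrightarrow> h \<in> carrier G \<Longrightarrow> T (g \<otimes> h) f = T g (T h f)"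
  by (simp add: Tg_def inv_mult_group action_mult)

lemma T_one: "T \<one> f = f"
  by (simp add: Tg_def action_one)

lemma T_inv_cancel: "g \<in> carrier G \<Longrightarrow> T (inv g) (T g f) = f"
  by (metis T_mult T_one inv_closed l_inv)

lemma T_scale: "T g (\<lambda>x. r * f x) = (\<lambda>x. r * T g f x)"
  by (simp add: Tg_def)

lemma T_eigen_mult:
  assumes "g \<in> carrier G" "h \<in> carrier G"
    and "T g u = (\<lambda>x. \<alpha> * u x)" "T h u = (\<lambda>x. \<beta> * u x)"
  shows "T (g \<otimes> h) u = (\<lambda>x. \<alpha> * \<beta> * u x)"
  using assms by (simp add: T_mult T_scale mult.assoc mult.left_commute)

lemma subgroup_fixing: "subgroup {g \<in> carrier G. T g f = f} G"
proof (rule subgroupI)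
  show "{g \<in> carrier G. T g f = f} \<noteq> {}"
    using T_one by blast
  show "inv g \<in> {g \<in> carrier G. T g f = f}" if "g \<in> {g \<in> carrier G. T g f = f}" for g
    using that T_inv_cancel[of g f] by simp
  show "g \<otimes> h \<in> {g \<in> carrier G. T g f = f}"
    if "g \<in> {g \<in> carrier G. T g f = f}" "h \<in> {g \<in> carrier G. T g f = f}" for g h
    using that by (simp add: T_mult)
qed auto

end

locale invariant_schroedinger =
  connected_schroedinger_graph b c + translation_action G \<phi>
  for b :: "'x::countable \<Rightarrow> 'x \<Rightarrow> real" and c
    and G :: "('g, 'z) monoid_scheme" (structure) and \<phi> :: "'g \<Rightarrow> 'x \<Rightarrow> 'x" +
  assumes H_invariant: "H_invariant G \<phi> b c"
begin

lemma T_harmonic: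
  assumes g: "g \<in> carrier G" and f: "harmonic b c f"
  shows "harmonic b c (T g f)"
  using H_invariant f bspec[OF H_invariant[unfolded H_invariant_def] g]
  by (auto simp: harmonic_def Tg_def)

lemma T_pos_harmonic:
  assumes g: "g \<in> carrier G" and f: "f \<in> pos_harmonic b c"
  shows "T g f \<in> pos_harmonic b c"
proof -
  obtain y where "f y \<noteq> 0"
    using f by (auto simp: pos_harmonic_def)
  moreover have "T g f (\<phi> g y) = f y"
    using g by (simp add: T_apply action_mult[symmetric] action_one)
  ultimately have "T g f \<noteq> (\<lambda>x. 0)"
    by (metis (full_types))
  then show ?thesis
    using T_harmonic[OF g] f by (simp add: pos_harmonic_def T_apply)
qed

lemma translated_harnack:
  obtains C where "0 \<le> C"
    "\<And>f a. f \<in> pos_harmonic b c \<Longrightarrow> a \<in> carrier G \<Longrightarrow> f (\<phi> a y) \<le> C * f (\<phi> a x)"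
proof -
  obtain C where C: "0 \<le> C" "\<forall>f. harmonic b c f \<and> (\<forall>x. 0 \<le> f x) \<longrightarrow> f y \<le> C * f x"
    using harnack_inequality[of y x] by blast
  have "f (\<phi> a y) \<le> C * f (\<phi> a x)" if "f \<in> pos_harmonic b c" "a \<in> carrier G" for f a
  proof -
    have "T (inv a) f \<in> pos_harmonic b c"
      using T_pos_harmonic that by simp
    then have "T (inv a) f y \<le> C * T (inv a) f x"
      using C(2) by (simp add: pos_harmonic_def)
    then show ?thesis
      using that by (simp add: T_apply)
  qed
  with C(1) show ?thesis
    using that by blast
qed

end


section \<open>The compact base of the cone of positive harmonic functions\<close>

lemma pow_square_le_pow_imp_le_one:
  fixes s A :: real
  assumes A: "0 \<le> A" and bound: "\<And>n. s ^ (n * n) \<le> A ^ n"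
  shows "s \<le> 1"
proof (rule ccontr)
  assume "\<not> s \<le> 1"
  then have s: "1 < s"
    by simp
  have "s ^ Suc n \<le> A" for n
  proof (rule power_le_imp_le_base)
    show "(s ^ Suc n) ^ Suc n \<le> A ^ Suc n"
      unfolding power_mult[symmetric] by (rule bound)
  qed (rule A)
  moreover obtain n where "A < s ^ n"
    using real_arch_pow[OF s] by blast
  moreover have "s ^ n \<le> s ^ Suc n"
    using s by (intro power_increasing) auto
  ultimately show False
    by (meson not_le order.trans)
qed

locale harmonic_cone = invariant_schroedinger b c G \<phi>
  for b :: "'x::countable \<Rightarrow> 'x \<Rightarrow> real" and c
    and G :: "('g, 'z) monoid_scheme" (structure) and \<phi> :: "'g \<Rightarrow> 'x \<Rightarrow> 'x" +
  fixes x0 :: 'x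
  assumes cocompact: "cocompact G \<phi>"
begin

definition normalized_harmonic :: "('x \<Rightarrow> real) set"
  where "normalized_harmonic = {f \<in> pos_harmonic b c. f x0 = 1}"

definition K :: "('x \<Rightarrow> real) set"
  where "K = closure normalized_harmonic"

lemma normalized_harmonic_subset_K: "normalized_harmonic \<subseteq> K"
  unfolding K_def by (rule closure_subset)

lemma K_subset_closed: "closed S \<Longrightarrow> normalized_harmonic \<subseteq> S \<Longrightarrow> K \<subseteq> S"
  unfolding K_def by (rule closure_minimal)

lemma K_map_into:
  assumes "continuous_on K F" "F ` normalized_harmonic \<subseteq> normalized_harmonic"
  shows "F ` K \<subseteq> K"
  unfolding K_def
proof (rule image_closure_subset)
  show "continuous_on (closure normalized_harmonic) F"
    using assms(1) by (simp add: K_def)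
  show "F ` normalized_harmonic \<subseteq> closure normalized_harmonic"
    using assms(2) closure_subset by blast
qed simp

lemma normalize_in_normalized_harmonic:
  assumes "harmonic b c h" "\<forall>x. 0 \<le> h x" "0 < h x0"
  shows "(\<lambda>x. h x / h x0) \<in> normalized_harmonic"
proof -
  have "harmonic b c (\<lambda>x. (1 / h x0) * h x + 0 * h x)"
    by (rule harmonic_lincomb[OF assms(1,1)])
  moreover have "(\<lambda>x. h x / h x0) \<noteq> (\<lambda>x. 0)"
    using assms(3) by (metis div_self less_irrefl zero_neq_one)
  ultimately show ?thesis
    using assms by (simp add: normalized_harmonic_def pos_harmonic_def)
qed

lemma K_eval_x0:
  assumes "u \<in> K"
  shows "u x0 = 1"
proof -
  have "closed {f::'x \<Rightarrow> real. f x0 = 1}"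
    by (intro closed_Collect_eq continuous_on_fun_eval continuous_on_const)
  then have "K \<subseteq> {f. f x0 = 1}"
    by (rule K_subset_closed) (auto simp: normalized_harmonic_def)
  with assms show ?thesis
    by blast
qed

lemma K_nonneg:
  assumes "u \<in> K"
  shows "0 \<le> u y"
proof -
  have "closed {f::'x \<Rightarrow> real. 0 \<le> f y}"
    by (intro closed_Collect_le continuous_on_fun_eval continuous_on_const)
  then have "K \<subseteq> {f. 0 \<le> f y}"
    by (rule K_subset_closed) (auto simp: normalized_harmonic_def pos_harmonic_def)
  with assms show ?thesis
    by blast
qed

lemma K_harnack:
  obtains C where "0 \<le> C" "\<And>u a. u \<in> K \<Longrightarrow> a \<in> carrier G \<Longrightarrow> u (\<phi> a y) \<le> C * u (\<phi> a x)"
proof -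
  obtain C where C: "0 \<le> C"
    "\<And>f a. f \<in> pos_harmonic b c \<Longrightarrow> a \<in> carrier G \<Longrightarrow> f (\<phi> a y) \<le> C * f (\<phi> a x)"
    using translated_harnack by blast
  have "K \<subseteq> (\<Inter>a\<in>carrier G. {f. f (\<phi> a y) \<le> C * f (\<phi> a x)})"
  proof (rule K_subset_closed)
    show "closed (\<Inter>a\<in>carrier G. {f. f (\<phi> a y) \<le> C * f (\<phi> a x)})"
      by (intro closed_INT ballI closed_Collect_le continuous_on_fun_eval continuous_on_mult
          continuous_on_const)
    show "normalized_harmonic \<subseteq> (\<Inter>a\<in>carrier G. {f. f (\<phi> a y) \<le> C * f (\<phi> a x)})"
      using C(2) by (auto simp: normalized_harmonic_def)
  qed
  then show ?thesis
    using that[OF C(1)] by blast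
qed

lemma K_pos:
  assumes u: "u \<in> K"
  shows "0 < u y"
proof -
  obtain C where "\<And>u a. u \<in> K \<Longrightarrow> a \<in> carrier G \<Longrightarrow> u (\<phi> a x0) \<le> C * u (\<phi> a y)"
    using K_harnack by blast
  from this[OF u one_closed] have "1 \<le> C * u y"
    using K_eval_x0[OF u] by (simp add: action_one)
  then show ?thesis
    using K_nonneg[OF u, of y] by (cases "u y = 0") auto
qed

lemma compact_K: "compact K"
proof -
  have "\<exists>B. \<forall>u\<in>K. u y \<le> B" for y
  proof -
    obtain C where C: "\<And>u a. u \<in> K \<Longrightarrow> a \<in> carrier G \<Longrightarrow> u (\<phi> a y) \<le> C * u (\<phi> a x0)"
      using K_harnack by blast
    have "\<forall>u\<in>K. u y \<le> C"
      using C[OF _ one_closed] K_eval_x0 by (simp add: action_one) (metis mult.right_neutral)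
    then show ?thesis ..
  qed
  then obtain B where B: "\<And>u y. u \<in> K \<Longrightarrow> u y \<le> B y"
    by metis
  have "compact (PiE UNIV (\<lambda>y. {0..B y}))"
    by (rule compact_PiE_intervals)
  moreover have "K \<subseteq> PiE UNIV (\<lambda>y. {0..B y})"
    using B K_nonneg by (auto simp: PiE_iff)
  ultimately show ?thesis
    using compact_Int_closed[of "PiE UNIV (\<lambda>y. {0..B y})" K]
    by (simp add: K_def Int_absorb1 del: PiE_UNIV_domain)
qed

lemma K_normalized_translate:
  assumes g: "g \<in> carrier G" and u: "u \<in> K"
  shows "(\<lambda>x. T g u x / T g u x0) \<in> K"
proof -
  have "(\<lambda>f x. T g f x / T g f x0) ` K \<subseteq> K"
  proof (rule K_map_into)
    show "continuous_on K (\<lambda>f x. T g f x / T g f x0)"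
      unfolding T_apply
    proof (intro continuous_on_coordinatewise_then_product continuous_on_divide continuous_on_fun_eval
        ballI)
      show "f (\<phi> (inv g) x0) \<noteq> 0" if "f \<in> K" for f
        using K_pos[OF that, of "\<phi> (inv g) x0"] by simp
    qed
    show "(\<lambda>f x. T g f x / T g f x0) ` normalized_harmonic \<subseteq> normalized_harmonic"
    proof clarify
      fix f assume "f \<in> normalized_harmonic"
      then have "T g f \<in> pos_harmonic b c"
        using T_pos_harmonic[OF g] by (simp add: normalized_harmonic_def)
      then show "(\<lambda>x. T g f x / T g f x0) \<in> normalized_harmonic"
        by (intro normalize_in_normalized_harmonic pos_harmonic_pos) (simp_all add: pos_harmonic_def)
    qed
  qed
  then show ?thesis
    using u by blast
qed

lemma K_normalized_difference:
  assumes g: "g \<in> carrier G" and dominated: "\<And>f x. f \<in> K \<Longrightarrow> T g f x \<le> M * f x"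
    and \<epsilon>: "0 \<le> \<epsilon>" "\<epsilon> * M < 1" and u: "u \<in> K"
  shows "(\<lambda>x. (u x - \<epsilon> * T g u x) / (u x0 - \<epsilon> * T g u x0)) \<in> K"
proof -
  have diff_nonneg: "0 \<le> f x - \<epsilon> * T g f x" if "f \<in> K" for f x
  proof -
    have "\<epsilon> * T g f x \<le> (\<epsilon> * M) * f x"
      using mult_left_mono[OF dominated[OF that] \<epsilon>(1)] by (simp add: mult.assoc)
    also have "\<dots> \<le> 1 * f x"
      using \<epsilon>(2) K_nonneg[OF that] by (intro mult_right_mono) auto
    finally show ?thesis
      by simp
  qed
  have diff_pos: "0 < f x0 - \<epsilon> * T g f x0" if "f \<in> K" for f
    using mult_left_mono[OF dominated[OF that, of x0] \<epsilon>(1)] \<epsilon>(2) K_eval_x0[OF that] by simp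
  have "(\<lambda>f x. (f x - \<epsilon> * T g f x) / (f x0 - \<epsilon> * T g f x0)) ` K \<subseteq> K"
  proof (rule K_map_into)
    show "continuous_on K (\<lambda>f x. (f x - \<epsilon> * T g f x) / (f x0 - \<epsilon> * T g f x0))"
      unfolding T_apply using diff_pos less_irrefl
      by (intro continuous_on_coordinatewise_then_product continuous_on_divide continuous_on_diff
          continuous_on_mult continuous_on_const continuous_on_fun_eval)
         (fastforce simp: T_apply)+
    show "(\<lambda>f x. (f x - \<epsilon> * T g f x) / (f x0 - \<epsilon> * T g f x0)) ` normalized_harmonic
        \<subseteq> normalized_harmonic"
    proof clarify
      fix f assume "f \<in> normalized_harmonic"
      then have fK: "f \<in> K" and "f \<in> pos_harmonic b c"
        using normalized_harmonic_subset_K by (auto simp: normalized_harmonic_def)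
      then have "harmonic b c (\<lambda>x. 1 * f x + (- \<epsilon>) * T g f x)"
        using T_pos_harmonic[OF g] by (intro harmonic_lincomb) (simp_all add: pos_harmonic_def)
      then show "(\<lambda>x. (f x - \<epsilon> * T g f x) / (f x0 - \<epsilon> * T g f x0)) \<in> normalized_harmonic"
        using diff_nonneg[OF fK] diff_pos[OF fK] by (intro normalize_in_normalized_harmonic) simp_all
    qed
  qed
  then show ?thesis
    using u by blast
qed

text \<open>If \<open>T\<^sub>g\<close> is dominated on \<open>K\<close>, then an extreme point \<open>u\<close> is a convex combination of the
  normalizations of \<open>T\<^sub>g u\<close> and of \<open>u - \<epsilon> T\<^sub>g u\<close>, which must therefore coincide.\<close>
lemma extreme_point_eigenfunction:
  assumes u: "extreme_point_fun u K" and g: "g \<in> carrier G" and M: "0 \<le> M"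
    and dominated: "\<And>f x. f \<in> K \<Longrightarrow> T g f x \<le> M * f x"
  shows "T g u = (\<lambda>x. T g u x0 * u x)"
proof -
  have uK: "u \<in> K"
    using u by (simp add: extreme_point_fun_def)
  define \<epsilon> :: real where "\<epsilon> = 1 / (2 * (M + 1))"
  have \<epsilon>: "0 < \<epsilon>" "\<epsilon> * M < 1"
    using M by (simp_all add: \<epsilon>_def field_simps)
  define a where "a = \<epsilon> * T g u x0"
  have Tu_pos: "0 < T g u x0"
    using K_pos[OF uK] by (simp add: T_apply)
  then have a_pos: "0 < a"
    using \<epsilon>(1) by (simp add: a_def)
  have "a \<le> \<epsilon> * M"
    using mult_left_mono[OF dominated[OF uK, of x0]] \<epsilon>(1) K_eval_x0[OF uK] by (simp add: a_def)
  then have a_less: "a < 1"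
    using \<epsilon>(2) by simp
  define v where "v = (\<lambda>x. T g u x / T g u x0)"
  define w where "w = (\<lambda>x. (u x - \<epsilon> * T g u x) / (u x0 - \<epsilon> * T g u x0))"
  have vK: "v \<in> K"
    unfolding v_def by (rule K_normalized_translate[OF g uK])
  have wK: "w \<in> K"
    unfolding w_def using \<epsilon> by (intro K_normalized_difference[OF g dominated _ _ uK]) simp_all
  have split: "u = (\<lambda>x. (1 - a) * w x + a * v x)"
  proof
    fix x
    have "(1 - a) * w x = u x - \<epsilon> * T g u x"
      using a_less K_eval_x0[OF uK] by (simp add: w_def a_def)
    moreover have "a * v x = \<epsilon> * T g u x"
      using Tu_pos by (simp add: v_def a_def)
    ultimately show "u x = (1 - a) * w x + a * v x"
      by simp
  qed
  have "w = v"
    using u vK wK a_pos a_less split by (auto simp: extreme_point_fun_def)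
  then have "u = v"
    using split by (simp add: fun_eq_iff algebra_simps)
  then show ?thesis
    using Tu_pos by (simp add: v_def fun_eq_iff field_simps)
qed

text \<open>Write \<open>x = a v\<close> with \<open>v\<close> in a finite fundamental set; modulo the commutator \<open>[a, g\<^sup>-\<^sup>1]\<close>, which
  fixes \<open>K\<close>, the point \<open>g\<^sup>-\<^sup>1 x\<close> becomes \<open>a g\<^sup>-\<^sup>1 v\<close>, and Harnack compares it with \<open>a v\<close>.\<close>
lemma K_translation_bound:
  assumes fixed: "\<forall>f\<in>K. R_invariant G \<phi> (lower_central G (Suc k)) f"
    and g: "g \<in> lower_central G k"
  obtains M where "0 \<le> M" "\<And>f x. f \<in> K \<Longrightarrow> T g f x \<le> M * f x"
proof -
  have gG: "g \<in> carrier G"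
    using g lower_central_carrier by blast
  obtain V where V: "finite V" "(\<Union>a\<in>carrier G. \<phi> a ` V) = UNIV"
    using cocompact by (auto simp: cocompact_def)
  have "\<exists>C\<ge>0. \<forall>f\<in>K. \<forall>a\<in>carrier G. f (\<phi> a (\<phi> (inv g) v)) \<le> C * f (\<phi> a v)" for v
    using K_harnack by metis
  then obtain C where C: "\<And>v. 0 \<le> C v"
    "\<And>v f a. f \<in> K \<Longrightarrow> a \<in> carrier G \<Longrightarrow> f (\<phi> a (\<phi> (inv g) v)) \<le> C v * f (\<phi> a v)"
    by metis
  define M where "M = (\<Sum>v\<in>V. C v)"
  have "T g f x \<le> M * f x" if f: "f \<in> K" for f x
  proof -
    obtain a v where a: "a \<in> carrier G" and v: "v \<in> V" and x: "x = \<phi> a v"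
      using V(2) by blast
    define w where "w = commutator a (inv g)"
    have w: "w \<in> lower_central G (Suc k)"
      unfolding w_def
      by (rule commutator_in_lower_central[OF a subgroup.m_inv_closed[OF subgroup_lower_central g]])
    then have wG: "w \<in> carrier G"
      by (rule lower_central_carrier)
    have "inv g \<otimes> a = inv w \<otimes> (a \<otimes> inv g)"
      unfolding w_def by (rule mult_swap_commutator[OF a inv_closed[OF gG]])
    then have "T g f x = T w f (\<phi> a (\<phi> (inv g) v))"
      using a gG wG by (simp add: T_apply x action_mult[symmetric])
    also have "\<dots> = f (\<phi> a (\<phi> (inv g) v))"
      using fixed f w by (simp add: R_invariant_def)
    also have "\<dots> \<le> C v * f x"
      using C(2)[OF f a] x by simp
    also have "\<dots> \<le> M * f x"
      using C(1) V(1) v K_nonneg[OF f]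
      by (intro mult_right_mono) (auto simp: M_def intro: member_le_sum)
    finally show ?thesis .
  qed
  moreover have "0 \<le> M"
    using C(1) by (simp add: M_def sum_nonneg)
  ultimately show ?thesis
    using that by blast
qed

lemma extreme_point_lower_central_eigenfunction:
  assumes fixed: "\<forall>f\<in>K. R_invariant G \<phi> (lower_central G (Suc k)) f"
    and u: "extreme_point_fun u K" and g: "g \<in> lower_central G k"
  shows "T g u = (\<lambda>x. T g u x0 * u x)"
  using K_translation_bound[OF fixed g] extreme_point_eigenfunction[OF u lower_central_carrier[OF g]]
  by metis


lemma K_power_growth:
  assumes s: "s \<in> carrier G"
  obtains C where "0 \<le> C"
    "\<And>u a n. u \<in> K \<Longrightarrow> a \<in> carrier G \<Longrightarrow> u (\<phi> (a \<otimes> s [^] n) x0) \<le> C ^ n * u (\<phi> a x0)"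
proof -
  obtain C where C: "0 \<le> C" "\<And>u a. u \<in> K \<Longrightarrow> a \<in> carrier G \<Longrightarrow> u (\<phi> a (\<phi> s x0)) \<le> C * u (\<phi> a x0)"
    using K_harnack by blast
  have "u (\<phi> (a \<otimes> s [^] n) x0) \<le> C ^ n * u (\<phi> a x0)"
    if u: "u \<in> K" and a: "a \<in> carrier G" for u a n
  proof (induction n)
    case 0
    show ?case
      using a by simp
  next
    case (Suc n)
    have "u (\<phi> (a \<otimes> s [^] Suc n) x0) = u (\<phi> (a \<otimes> s [^] n) (\<phi> s x0))"
      using a s by (simp add: m_assoc action_mult)
    also have "\<dots> \<le> C * u (\<phi> (a \<otimes> s [^] n) x0)"
      using C(2) u a s by simp
    also have "\<dots> \<le> C * (C ^ n * u (\<phi> a x0))"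
      using Suc C(1) by (rule mult_left_mono)
    finally show ?case
      by simp
  qed
  with C(1) show ?thesis
    using that by blast
qed

lemma K_word_growth:
  assumes "set ss \<subseteq> carrier G"
  obtains A where "0 \<le> A"
    "\<And>u n. u \<in> K \<Longrightarrow> u (\<phi> (foldl (\<lambda>w s. w \<otimes> s [^] n) \<one> ss) x0) \<le> A ^ n"
  using assms
proof (induction ss arbitrary: thesis rule: rev_induct)
  case Nil
  show ?case
    using Nil(1)[of 1] K_eval_x0 by (simp add: action_one) (metis order.refl)
next
  case (snoc s ss)
  obtain A where A: "0 \<le> A"
    "\<And>u n. u \<in> K \<Longrightarrow> u (\<phi> (foldl (\<lambda>w s. w \<otimes> s [^] n) \<one> ss) x0) \<le> A ^ n"
    using snoc.IH snoc.prems(2) by auto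
  have s: "s \<in> carrier G"
    using snoc.prems(2) by simp
  obtain C where C: "0 \<le> C"
    "\<And>u a n. u \<in> K \<Longrightarrow> a \<in> carrier G \<Longrightarrow> u (\<phi> (a \<otimes> s [^] n) x0) \<le> C ^ n * u (\<phi> a x0)"
    using K_power_growth[OF s] by blast
  have word: "foldl (\<lambda>w s. w \<otimes> s [^] n) \<one> ss \<in> carrier G" for n :: nat
    using snoc.prems(2) by (induction ss rule: rev_induct) auto
  have "u (\<phi> (foldl (\<lambda>w s. w \<otimes> s [^] n) \<one> (ss @ [s])) x0) \<le> (C * A) ^ n"
    if u: "u \<in> K" for u n
  proof -
    have "u (\<phi> (foldl (\<lambda>w s. w \<otimes> s [^] n) \<one> (ss @ [s])) x0)
        \<le> C ^ n * u (\<phi> (foldl (\<lambda>w s. w \<otimes> s [^] n) \<one> ss) x0)"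
      using C(2)[OF u word] by simp
    also have "\<dots> \<le> C ^ n * A ^ n"
      using A(2)[OF u] C(1) by (simp add: mult_left_mono)
    finally show ?thesis
      by (simp add: power_mult_distrib)
  qed
  moreover have "0 \<le> C * A"
    using A(1) C(1) by simp
  ultimately show ?case
    using snoc.prems(1) by blast
qed

lemma K_commutator_growth:
  assumes h: "h \<in> carrier G" and k: "k \<in> carrier G"
  obtains A where "0 \<le> A" "\<And>u n. u \<in> K \<Longrightarrow> u (\<phi> (commutator (h [^] n) (k [^] n)) x0) \<le> A ^ n"
proof -
  have "foldl (\<lambda>w s. w \<otimes> s [^] n) \<one> [h, k, inv h, inv k] = commutator (h [^] n) (k [^] n)"
    for n :: nat
    using h k by (simp add: nat_pow_inv)
  then show ?thesis
    using K_word_growth[of "[h, k, inv h, inv k]"] h k that by auto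
qed


lemma extreme_point_commutator_eigenvalue:
  assumes fixed: "\<forall>f\<in>K. R_invariant G \<phi> (lower_central G (Suc (Suc m))) f"
    and u: "extreme_point_fun u K" and h: "h \<in> carrier G" and k: "k \<in> lower_central G m"
  shows "T (commutator (h [^] n) (k [^] n)) u x0 = T (commutator h k) u x0 ^ (n * n)"
proof -
  let ?S = "lower_central G (Suc m)"
  have uK: "u \<in> K"
    using u by (simp add: extreme_point_fun_def)
  have eigen: "T g u = (\<lambda>x. T g u x0 * u x)" if "g \<in> ?S" for g
    using extreme_point_lower_central_eigenfunction[OF fixed u that] .
  have mult: "T (g \<otimes> g') u x0 = T g u x0 * T g' u x0" if "g \<in> ?S" "g' \<in> ?S" for g g'
    using T_eigen_mult[OF _ _ eigen eigen, of g g'] that K_eval_x0[OF uK]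
    by (simp add: lower_central_carrier)
  have conj: "T (a \<otimes> g \<otimes> inv a) u x0 = T g u x0" if a: "a \<in> carrier G" and g: "g \<in> ?S" for a g
  proof -
    have gG: "g \<in> carrier G"
      using g by (rule lower_central_carrier)
    have c: "commutator a g \<in> lower_central G (Suc (Suc m))"
      by (rule commutator_in_lower_central[OF a g])
    have "T (a \<otimes> g \<otimes> inv a) u = T (commutator a g) (T g u)"
      by (subst conj_eq_commutator_mult[OF a gG])
         (simp add: T_mult a gG lower_central_carrier[OF c])
    also have "\<dots> = (\<lambda>x. T g u x0 * T (commutator a g) u x)"
      by (subst eigen[OF g]) (rule T_scale)
    also have "\<dots> = (\<lambda>x. T g u x0 * u x)"
      using fixed uK c by (simp add: R_invariant_def)
    finally show ?thesis
      using K_eval_x0[OF uK] by simp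
  qed
  show ?thesis
  proof (rule character_commutator_power[OF subgroup_lower_central subgroup_lower_central _ mult _ conj])
    show "T \<one> u x0 = 1"
      using K_eval_x0[OF uK] by (simp add: T_one)
    show "a \<otimes> g \<otimes> inv a \<in> ?S" if "a \<in> carrier G" "g \<in> ?S" for a g
      using that by (rule lower_central_conj_closed)
    show "commutator a k' \<in> ?S" if "a \<in> carrier G" "k' \<in> lower_central G m" for a k'
      using that by (rule commutator_in_lower_central)
  qed (use h k in auto)
qed

text \<open>The eigenvalue \<open>r\<close> of \<open>[h, k]\<close> gives \<open>r^(n^2)\<close> for \<open>[h\<^sup>n, k\<^sup>n]\<close>, whereas Harnack bounds the
  values of \<open>u\<close> along these words by \<open>A\<^sup>n\<close> only; hence \<open>r = 1\<close>.\<close>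
lemma extreme_point_commutator_fixed:
  assumes fixed: "\<forall>f\<in>K. R_invariant G \<phi> (lower_central G (Suc (Suc m))) f"
    and u: "extreme_point_fun u K" and h: "h \<in> carrier G" and k: "k \<in> lower_central G m"
  shows "T (commutator h k) u = u"
proof -
  have uK: "u \<in> K"
    using u by (simp add: extreme_point_fun_def)
  have kG: "k \<in> carrier G"
    using k by (rule lower_central_carrier)
  define r where "r = T (commutator h k) u x0"
  define c where "c n = commutator (h [^] n) (k [^] n)" for n :: nat
  have cG: "c n \<in> carrier G" for n
    using h kG by (simp add: c_def)
  have eigenvalue: "T (c n) u x0 = r ^ (n * n)" for n
    unfolding c_def r_def by (rule extreme_point_commutator_eigenvalue[OF fixed u h k])
  have c_eigen: "T (c n) u = (\<lambda>x. r ^ (n * n) * u x)" for n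
  proof -
    have "c n \<in> lower_central G (Suc m)"
      unfolding c_def
      by (rule commutator_in_lower_central[OF _ subgroup_nat_pow_closed[OF subgroup_lower_central k]])
         (use h in simp)
    then show ?thesis
      using extreme_point_lower_central_eigenfunction[OF fixed u] eigenvalue by metis
  qed
  have r_pos: "0 < r"
    using K_pos[OF uK] by (simp add: r_def T_apply)
  obtain A where A: "0 \<le> A" "\<And>n. u (\<phi> (commutator (k [^] n) (h [^] n)) x0) \<le> A ^ n"
    using K_commutator_growth[OF kG h] uK by metis
  obtain B where B: "0 \<le> B" "\<And>n. u (\<phi> (c n) x0) \<le> B ^ n"
    using K_commutator_growth[OF h kG] uK unfolding c_def by metis
  have "r ^ (n * n) \<le> A ^ n" for n
    using A(2)[of n] h kG by (simp add: eigenvalue[symmetric] T_apply c_def inv_commutator)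
  then have "r \<le> 1"
    by (rule pow_square_le_pow_imp_le_one[OF A(1)])
  moreover have "(1 / r) ^ (n * n) \<le> B ^ n" for n
  proof -
    have "u x0 = T (inv (c n)) (T (c n) u) x0"
      using T_inv_cancel[OF cG] by simp
    also have "\<dots> = r ^ (n * n) * u (\<phi> (c n) x0)"
      using cG by (simp add: c_eigen T_scale T_apply)
    finally have "u (\<phi> (c n) x0) = (1 / r) ^ (n * n)"
      using K_eval_x0[OF uK] r_pos by (simp add: field_simps power_one_over)
    then show ?thesis
      using B(2) by metis
  qed
  then have "1 / r \<le> 1"
    by (rule pow_square_le_pow_imp_le_one[OF B(1)])
  ultimately have "r = 1"
    using r_pos by (simp add: field_simps)
  then show ?thesis
    using c_eigen[of 1] h kG by (simp add: c_def)
qed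

lemma extreme_point_lower_central_fixed:
  assumes fixed: "\<forall>f\<in>K. R_invariant G \<phi> (lower_central G (Suc (Suc m))) f"
    and u: "extreme_point_fun u K" and g: "g \<in> lower_central G (Suc m)"
  shows "T g u = u"
proof -
  have "{commutator h k | h k. h \<in> carrier G \<and> k \<in> lower_central G m} \<subseteq> {g \<in> carrier G. T g u = u}"
    using extreme_point_commutator_fixed[OF fixed u] lower_central_carrier by blast
  then have "lower_central G (Suc m) \<subseteq> {g \<in> carrier G. T g u = u}"
    unfolding lower_central.simps by (rule generate_subgroup_incl[OF _ subgroup_fixing])
  then show ?thesis
    using g by blast
qed


lemma K_lower_central_invariant_step:
  assumes "\<forall>f\<in>K. R_invariant G \<phi> (lower_central G (Suc (Suc m))) f"
  shows "\<forall>f\<in>K. R_invariant G \<phi> (lower_central G (Suc m)) f"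
  unfolding R_invariant_def
proof (intro ballI ext)
  fix f g x
  assume f: "f \<in> K" and g: "g \<in> lower_central G (Suc m)"
  have "u (\<phi> (inv g) x) = u x" if "extreme_point_fun u K" for u
    using fun_cong[OF extreme_point_lower_central_fixed[OF assms that g], of x] by (simp add: T_apply)
  then have "f (\<phi> (inv g) x) \<le> f x" "f x \<le> f (\<phi> (inv g) x)"
    using le_if_le_on_extreme_points[OF compact_K _ f] by (metis order.refl)+
  then show "T g f x = f x"
    by (simp add: T_apply)
qed

lemma K_lower_central_invariant:
  assumes trivial: "lower_central G N = {\<one>}" and n: "0 < n"
  shows "\<forall>f\<in>K. R_invariant G \<phi> (lower_central G n) f"
proof -
  obtain N' where N': "n \<le> N'" "lower_central G N' \<subseteq> {\<one>}"
    using lower_central_antimono[of N "max N n"] trivial by (metis max.cobounded1 max.cobounded2)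
  from N'(2) have top: "\<forall>f\<in>K. R_invariant G \<phi> (lower_central G N') f"
    by (auto simp: R_invariant_def T_one)
  show ?thesis
    using N'(1)
  proof (induction rule: inc_induct)
    case base
    show ?case
      by (rule top)
  next
    case (step i)
    then obtain m where "i = Suc m"
      using n gr0_implies_Suc by fastforce
    then show ?case
      using step.IH K_lower_central_invariant_step by blast
  qed
qed

lemma extreme_point_multiplicative:
  assumes fixed: "\<forall>f\<in>K. R_invariant G \<phi> (lower_central G 1) f"
    and u: "extreme_point_fun u K"
  shows "multiplicative G \<phi> u"
proof -
  have uK: "u \<in> K"
    using u by (simp add: extreme_point_fun_def)
  have eigen: "T g u = (\<lambda>x. T g u x0 * u x)" if "g \<in> carrier G" for g
    using extreme_point_lower_central_eigenfunction[of 0 u g] fixed u that by simp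
  define \<gamma> where "\<gamma> h = T (inv h) u x0" for h
  have "\<gamma> (g \<otimes> h) = \<gamma> g * \<gamma> h" if "g \<in> carrier G" "h \<in> carrier G" for g h
    using T_eigen_mult[OF _ _ eigen eigen, of "inv h" "inv g"] that K_eval_x0[OF uK]
    by (simp add: \<gamma>_def inv_mult_group)
  moreover have "0 < \<gamma> g" for g
    using K_pos[OF uK] by (simp add: \<gamma>_def T_apply)
  moreover have "T g u = (\<lambda>x. \<gamma> (inv g) * u x)" if "g \<in> carrier G" for g
    using eigen[OF that] that by (simp add: \<gamma>_def)
  ultimately show ?thesis
    unfolding multiplicative_def R_multiplicative_def pos_mult_hom_def by blast
qed

end

theorem theorem1:
  fixes b :: "'x::countable \<Rightarrow> 'x \<Rightarrow> real" and c :: "'x \<Rightarrow> real"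
    and G :: "('g, 'z) monoid_scheme" and \<phi> :: "'g \<Rightarrow> 'x \<Rightarrow> 'x" and x0 :: 'x
  assumes "graph_over b c"
    and "connected_graph b"
    and "nilpotent_group G"
    and "group_action G UNIV \<phi>"
    and "cocompact G \<phi>"
    and "H_invariant G \<phi> b c"
  defines "K \<equiv> closure {f \<in> pos_harmonic b c. f x0 = 1}"
  shows "(\<forall>f\<in>K. R_invariant G \<phi> (commutator_subgroup G) f)
       \<and> (\<forall>f. extreme_point_fun f K \<and> harmonic b c f \<longrightarrow> multiplicative G \<phi> f)"
proof -
  interpret cone: harmonic_cone b c G \<phi> x0
    using assms(1,2,4-6)
    by intro_locales (simp_all add: schroedinger_graph_def connected_schroedinger_graph_axioms_def
        invariant_schroedinger_axioms_def harmonic_cone_axioms_def)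
  have K: "K = cone.K"
    by (simp add: K_def cone.K_def cone.normalized_harmonic_def)
  obtain N where "lower_central G N = {\<one>\<^bsub>G\<^esub>}"
    using assms(3) by (auto simp: nilpotent_group_def)
  then have fixed: "\<forall>f\<in>K. R_invariant G \<phi> (lower_central G 1) f"
    unfolding K by (rule cone.K_lower_central_invariant) simp
  show ?thesis
    using fixed cone.extreme_point_multiplicative[OF fixed[unfolded K]]
    by (simp add: K cone.commutator_subgroup_eq_lower_central)
qed

end
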